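(* Let $p=\xi_1+i\operatorname{Im}p$ be a smooth function on $T^\ast(\mathbb{R}^n)\smallsetminus0$ with $\operatorname{Im}p$ independent of $\xi_1$, and let $\gamma$ be a bicharacteristic of $\operatorname{Re}p=\xi_1$ with $L_p(\gamma)>0$. Then there exist bicharacteristics $\gamma_j$ of $\operatorname{Re}p$ and subintervals $\tilde\gamma_j\subset\gamma_j$ with $\gamma_j\dashrightarrow\gamma$, such that $|\tilde\gamma_j|\to L_p(\gamma)$, $\operatorname{Im}p$ strongly changes sign from $-$ to $+$ on $\gamma_j$, and $\operatorname{Im}p$ vanishes in a neighborhood of $\tilde\gamma_j$.
   Context: Write points of $T^\ast(\mathbb{R}^n)$ as $(x_1,x',\xi_1,\xi')$. A bicharacteristic of $\xi_1$ is $\gamma=[a,b]\times\{w_0\}=\{(t,x',0,\xi'):a\le t\le b\}$, $w_0=(x',0,\xi')$; write $g(t,w)$; $|\gamma|=b-a$. For $\gamma_j=[a_j,b_j]\times\{w_j\}$, $\gamma_j\dashrightarrow\gamma$ means $\liminf a_j\ge a$, $\limsup b_j\le b$, $w_j\to w_0$. $\operatorname{Im}p$ strongly changes sign from $-$ to $+$ on $[a,b]\times\{w_0\}$ if $\operatorname{Im}p(t,w_0)=0$ for $a\le t\le b$ and for every $\varepsilon>0$ there exist $a-\varepsilon<s_-<a$, $b<s_+<b+\varepsilon$ with $\operatorname{Im}p(s_-,w_0)<0<\operatorname{Im}p(s_+,w_0)$. If some sequence of bicharacteristics $\gamma_j$ of $\xi_1$ with this sign change satisfies $\gamma_j\dashrightarrow\gamma$,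 then $L_p(\gamma)=\inf\liminf_j|\gamma_j|$ over all such sequences. *)

theory Defs
  imports "HOL-Analysis.Analysis"
begin

text \<open>Points of the cotangent bundle of R^n are written (x1, x', xi1, xi') with
  x1, xi1 real and x', xi' in a Euclidean space 'a playing the role of R^(n-1).\<close>

type_synonym 'a cpt = "real \<times> 'a \<times> real \<times> 'a"

definition Tstar0 :: "('a::euclidean_space) cpt set" where
  "Tstar0 = {(x1, x', xi1, xi'). (xi1, xi') \<noteq> (0, 0)}"

fun Ck_on :: "nat \<Rightarrow> ('a::euclidean_space) set \<Rightarrow> ('a \<Rightarrow> 'b::real_normed_vector) \<Rightarrow> bool" where
  "Ck_on 0 S f = continuous_on S f"
| "Ck_on (Suc k) S f =
     (f differentiable_on S \<and> (\<forall>v\<in>Basis. Ck_on k S (\<lambda>x. frechet_derivative f (at x) v)))"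

definition smooth_on :: "('a::euclidean_space) set \<Rightarrow> ('a \<Rightarrow> 'b::real_normed_vector) \<Rightarrow> bool" where
  "smooth_on S f \<longleftrightarrow> (\<forall>k. Ck_on k S f)"

text \<open>w = (x', xi') stands for the point (x', 0, xi'); g(t,w) = (t, x', 0, xi').\<close>
definition gpt :: "real \<Rightarrow> 'a \<times> 'a \<Rightarrow> 'a cpt" where
  "gpt t w = (t, fst w, 0, snd w)"

text \<open>A bicharacteristic [a,b] x {w} of xi1 (lying in T*(R^n) minus 0).\<close>
definition is_bichar :: "real \<Rightarrow> real \<Rightarrow> ('a::euclidean_space) \<times> 'a \<Rightarrow> bool" where
  "is_bichar a b w \<longleftrightarrow> a \<le> b \<and> snd w \<noteq> 0"

definition strong_sign_change ::
  "(('a::euclidean_space) cpt \<Rightarrow> complex) \<Rightarrow> real \<Rightarrow> real \<Rightarrow> 'a \<times> 'a \<Rightarrow> bool" where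
  "strong_sign_change p a b w \<longleftrightarrow>
     (\<forall>t\<in>{a..b}. Im (p (gpt t w)) = 0) \<and>
     (\<forall>\<epsilon>>0. \<exists>sm sp. a - \<epsilon> < sm \<and> sm < a \<and> b < sp \<and> sp < b + \<epsilon> \<and>
                     Im (p (gpt sm w)) < 0 \<and> 0 < Im (p (gpt sp w)))"

definition bichar_conv ::
  "(nat \<Rightarrow> real) \<Rightarrow> (nat \<Rightarrow> real) \<Rightarrow> (nat \<Rightarrow> ('a::euclidean_space) \<times> 'a) \<Rightarrow>
   real \<Rightarrow> real \<Rightarrow> 'a \<times> 'a \<Rightarrow> bool" where
  "bichar_conv aj bj wj a b w \<longleftrightarrow>
     liminf (\<lambda>j. ereal (aj j)) \<ge> ereal a \<and> limsup (\<lambda>j. ereal (bj j)) \<le> ereal b \<and>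
     wj \<longlonglongrightarrow> w"

definition admissible_seq ::
  "(('a::euclidean_space) cpt \<Rightarrow> complex) \<Rightarrow> (nat \<Rightarrow> real) \<Rightarrow> (nat \<Rightarrow> real) \<Rightarrow>
   (nat \<Rightarrow> 'a \<times> 'a) \<Rightarrow> real \<Rightarrow> real \<Rightarrow> 'a \<times> 'a \<Rightarrow> bool" where
  "admissible_seq p aj bj wj a b w \<longleftrightarrow>
     (\<forall>j. is_bichar (aj j) (bj j) (wj j) \<and> strong_sign_change p (aj j) (bj j) (wj j)) \<and>
     bichar_conv aj bj wj a b w"

text \<open>L_p(gamma) (as an extended real), meaningful when some admissible sequence exists.\<close>
definition Lp :: "(('a::euclidean_space) cpt \<Rightarrow> complex) \<Rightarrow> real \<Rightarrow> real \<Rightarrow> 'a \<times> 'a \<Rightarrow> ereal" where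
  "Lp p a b w = Inf {liminf (\<lambda>j. ereal (bj j - aj j)) | aj bj wj. admissible_seq p aj bj wj a b w}"

end

theory Submission
  imports Defs
begin

text \<open>Take an admissible bicharacteristic \<open>[A, B] \<times> {W}\<close> close to \<open>\<gamma>\<close> of length almost \<open>L\<^sub>p(\<gamma>)\<close>, and
  points \<open>sm < A\<close>, \<open>sp > B\<close> close to it where \<open>Im p\<close> is negative resp. positive. These signs persist
  for \<open>W'\<close> near \<open>W\<close>, so by the intermediate value argument each such \<open>W'\<close> carries a run
  \<open>[\<alpha>, \<beta>] \<subseteq> [sm, sp]\<close> on which \<open>Im p\<close> strongly changes sign; by the definition of \<open>L\<^sub>p\<close> it
  has length almost \<open>L\<^sub>p(\<gamma>)\<close>, so all these runs contain a common interval of length almost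
  \<open>L\<^sub>p(\<gamma>)\<close>. As \<open>Im p\<close> does not depend on \<open>\<xi>\<^sub>1\<close>, it vanishes on a neighbourhood of that
  interval.\<close>

definition sign_change_run :: "(real \<Rightarrow> real) \<Rightarrow> real \<Rightarrow> real \<Rightarrow> bool" where
  "sign_change_run g \<alpha> \<beta> \<longleftrightarrow>
     (\<forall>t\<in>{\<alpha>..\<beta>}. g t = 0) \<and>
     (\<forall>\<epsilon>>0. \<exists>sm sp. \<alpha> - \<epsilon> < sm \<and> sm < \<alpha> \<and> \<beta> < sp \<and> sp < \<beta> + \<epsilon> \<and> g sm < 0 \<and> 0 < g sp)"

lemma strong_sign_change_iff_sign_change_run:
  "strong_sign_change p a b w \<longleftrightarrow> sign_change_run (\<lambda>t. Im (p (gpt t w))) a b"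
  unfolding strong_sign_change_def sign_change_run_def ..

lemma first_positive_crossing:
  fixes g :: "real \<Rightarrow> real"
  assumes cont: "continuous_on {t0..t1} g" and t01: "t0 \<le> t1" and g0: "g t0 \<le> 0" and g1: "0 < g t1"
  shows "\<exists>\<beta>. t0 \<le> \<beta> \<and> \<beta> < t1 \<and> g \<beta> = 0 \<and> (\<forall>t\<in>{t0..\<beta>}. g t \<le> 0) \<and>
           (\<forall>\<epsilon>>0. \<exists>s. \<beta> < s \<and> s < \<beta> + \<epsilon> \<and> 0 < g s)"
proof -
  define S where "S = {t\<in>{t0..t1}. 0 < g t}"
  define \<beta> where "\<beta> = Inf S"
  have S_ne: "S \<noteq> {}" and S_bdd: "bdd_below S"
    using g1 t01 unfolding S_def by (auto intro: bdd_belowI[of _ t0])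
  have \<beta>_le: "\<beta> \<le> t" if "t \<in> S" for t
    unfolding \<beta>_def using that S_bdd by (rule cInf_lower)
  have t0_le: "t0 \<le> \<beta>"
    unfolding \<beta>_def using S_ne by (intro cInf_greatest) (auto simp: S_def)
  have \<beta>_t1: "\<beta> \<le> t1"
    using \<beta>_le g1 t01 by (auto simp: S_def)
  have nonpos: "g t \<le> 0" if "t0 \<le> t" "t < \<beta>" for t
    using \<beta>_le[of t] that \<beta>_t1 by (fastforce simp: S_def)
  have g\<beta>_nonpos: "g \<beta> \<le> 0"
  proof (cases "\<beta> = t0")
    case False
    then have "closure {t0..<\<beta>} = {t0..\<beta>}"
      using t0_le by simp
    show ?thesis
      by (rule continuous_le_on_closure[of "{t0..<\<beta>}"])
        (use \<open>closure {t0..<\<beta>} = {t0..\<beta>}\<close> nonpos \<beta>_t1 False t0_le in \<open>auto intro: continuous_on_subset[OF cont]\<close>)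
  qed (use g0 in simp)
  have g\<beta>_nonneg: "0 \<le> g \<beta>"
  proof (rule continuous_ge_on_closure[where S = S and f = g and x = \<beta> and a = 0])
    have "closure S \<subseteq> {t0..t1}"
      unfolding S_def by (rule closure_minimal) auto
    then show "continuous_on (closure S) g"
      using continuous_on_subset[OF cont] by blast
    show "\<beta> \<in> closure S"
      unfolding \<beta>_def by (rule closure_contains_Inf[OF S_ne S_bdd])
  qed (auto simp: S_def)
  have "g \<beta> = 0"
    using g\<beta>_nonpos g\<beta>_nonneg by simp
  moreover have "\<exists>s. \<beta> < s \<and> s < \<beta> + \<epsilon> \<and> 0 < g s" if "\<epsilon> > 0" for \<epsilon>
  proof -
    have "Inf S < \<beta> + \<epsilon>"
      using that unfolding \<beta>_def by simp
    then obtain s where "s \<in> S" "s < \<beta> + \<epsilon>"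
      using cInf_less_iff[OF S_ne S_bdd] unfolding \<beta>_def by blast
    moreover have "0 < g s"
      using \<open>s \<in> S\<close> by (simp add: S_def)
    moreover have "\<beta> < s"
      using \<beta>_le[OF \<open>s \<in> S\<close>] \<open>g \<beta> = 0\<close> \<open>0 < g s\<close> by (metis order_less_le)
    ultimately show ?thesis
      by blast
  qed
  moreover have "\<forall>t\<in>{t0..\<beta>}. g t \<le> 0"
    using nonpos g\<beta>_nonpos by (metis atLeastAtMost_iff order_less_le)
  ultimately show ?thesis
    using t0_le \<beta>_t1 g1 by (metis order_less_le)
qed

text \<open>The left end \<open>\<alpha>\<close> of the run is the first crossing of \<open>s \<mapsto> -g(-s)\<close> on \<open>[-\<beta>, -t0]\<close>.\<close>

lemma sign_change_run_between:
  fixes g :: "real \<Rightarrow> real"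
  assumes cont: "continuous_on {t0..t1} g" and t01: "t0 \<le> t1" and g0: "g t0 < 0" and g1: "0 < g t1"
  shows "\<exists>\<alpha> \<beta>. t0 \<le> \<alpha> \<and> \<alpha> \<le> \<beta> \<and> \<beta> \<le> t1 \<and> sign_change_run g \<alpha> \<beta>"
proof -
  obtain \<beta> where \<beta>: "t0 \<le> \<beta>" "\<beta> < t1" "g \<beta> = 0" "\<forall>t\<in>{t0..\<beta>}. g t \<le> 0"
      and right: "\<forall>\<epsilon>>0. \<exists>s. \<beta> < s \<and> s < \<beta> + \<epsilon> \<and> 0 < g s"
    using first_positive_crossing[OF cont t01] g0 g1 by auto
  define h where "h s = - g (- s)" for s
  have "continuous_on {-\<beta>..-t0} h"
    unfolding h_def using \<beta>
    by (intro continuous_intros continuous_on_compose2[OF cont]) auto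
  then obtain \<beta>' where \<beta>': "-\<beta> \<le> \<beta>'" "\<beta>' < -t0" "\<forall>s\<in>{-\<beta>..\<beta>'}. h s \<le> 0"
      and left: "\<forall>\<epsilon>>0. \<exists>s. \<beta>' < s \<and> s < \<beta>' + \<epsilon> \<and> 0 < h s"
    using first_positive_crossing[of "-\<beta>" "-t0" h] \<beta> g0 by (auto simp: h_def)
  have zero: "\<forall>t\<in>{-\<beta>'..\<beta>}. g t = 0"
  proof
    fix t assume t: "t \<in> {-\<beta>'..\<beta>}"
    then have "g t \<le> 0"
      using \<beta>(4) \<beta>'(2) by auto
    moreover have "h (- t) \<le> 0"
      using \<beta>'(3) t by auto
    ultimately show "g t = 0"
      by (simp add: h_def)
  qed
  have "\<exists>sm sp. -\<beta>' - \<epsilon> < sm \<and> sm < -\<beta>' \<and> \<beta> < sp \<and> sp < \<beta> + \<epsilon> \<and> g sm < 0 \<and> 0 < g sp"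
    if \<epsilon>: "\<epsilon> > 0" for \<epsilon>
  proof -
    obtain s where "\<beta>' < s" "s < \<beta>' + \<epsilon>" "0 < h s"
      using left \<epsilon> by blast
    moreover obtain sp where "\<beta> < sp" "sp < \<beta> + \<epsilon>" "0 < g sp"
      using right \<epsilon> by blast
    ultimately show ?thesis
      by (intro exI[of _ "- s"] exI[of _ sp]) (auto simp: h_def)
  qed
  then show ?thesis
    using \<beta> \<beta>' zero unfolding sign_change_run_def
    by (intro exI[of _ "-\<beta>'"] exI[of _ \<beta>]) auto
qed

definition bichar_near :: "real \<Rightarrow> real \<Rightarrow> real \<Rightarrow> 'w::metric_space \<Rightarrow> real \<Rightarrow> real \<Rightarrow> 'w \<Rightarrow> bool" where
  "bichar_near \<eta> A B W a b w \<longleftrightarrow> a - \<eta> < A \<and> B < b + \<eta> \<and> dist W w < \<eta>"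

lemma bichar_conv_eventually_near:
  assumes conv: "bichar_conv A B W a b w" and \<eta>: "\<eta> > 0"
  shows "eventually (\<lambda>j. bichar_near \<eta> (A j) (B j) (W j) a b w) sequentially"
proof -
  have "ereal (a - \<eta>) < ereal a" "ereal b < ereal (b + \<eta>)"
    using \<eta> by simp_all
  then have "eventually (\<lambda>j. ereal (a - \<eta>) < ereal (A j)) sequentially"
      and "eventually (\<lambda>j. ereal (B j) < ereal (b + \<eta>)) sequentially"
    using conv unfolding bichar_conv_def le_Liminf_iff Limsup_le_iff by blast+
  moreover have "eventually (\<lambda>j. dist (W j) w < \<eta>) sequentially"
    using conv \<eta> unfolding bichar_conv_def by (intro tendstoD) auto
  ultimately show ?thesis
    unfolding bichar_near_def by eventually_elim simp
qed

lemma bichar_conv_if_near: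
  assumes e: "e \<longlonglongrightarrow> 0" and near: "\<forall>k. bichar_near (e k) (A k) (B k) (W k) a b w"
  shows "bichar_conv A B W a b w"
proof -
  have "(\<lambda>k. ereal (a - e k)) \<longlonglongrightarrow> ereal a" "(\<lambda>k. ereal (b + e k)) \<longlonglongrightarrow> ereal b"
    using tendsto_diff[OF tendsto_const e, of a] tendsto_add[OF tendsto_const e, of b] by simp_all
  then have "liminf (\<lambda>k. ereal (a - e k)) = ereal a" "limsup (\<lambda>k. ereal (b + e k)) = ereal b"
    by (simp_all add: lim_imp_Liminf lim_imp_Limsup)
  moreover have "a - e k \<le> A k" "B k \<le> b + e k" for k
    using near[rule_format, of k] unfolding bichar_near_def by linarith+
  then have "liminf (\<lambda>k. ereal (a - e k)) \<le> liminf (\<lambda>k. ereal (A k))"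
      and "limsup (\<lambda>k. ereal (B k)) \<le> limsup (\<lambda>k. ereal (b + e k))"
    by (intro Liminf_mono Limsup_mono always_eventually allI; simp)+
  moreover have "(\<lambda>k. dist (W k) w) \<longlonglongrightarrow> 0"
    by (rule Lim_null_comparison[OF _ e])
      (use near in \<open>auto intro!: always_eventually less_imp_le simp: bichar_near_def\<close>)
  ultimately show ?thesis
    unfolding bichar_conv_def using tendsto_dist_iff by fastforce
qed

lemma Lp_le_liminf:
  assumes "admissible_seq p aj bj wj a b w"
  shows "Lp p a b w \<le> liminf (\<lambda>j. ereal (bj j - aj j))"
  unfolding Lp_def by (rule Inf_lower) (use assms in blast)

lemma Lp_less_PInf:
  assumes adm: "admissible_seq p aj bj wj a b w"
  shows "Lp p a b w < \<infinity>"
proof -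
  have "eventually (\<lambda>j. bichar_near 1 (aj j) (bj j) (wj j) a b w) sequentially"
    using adm by (intro bichar_conv_eventually_near) (simp_all add: admissible_seq_def)
  then have bounded: "eventually (\<lambda>j. ereal (bj j - aj j) \<le> ereal (b - a + 2)) sequentially"
    by eventually_elim (simp add: bichar_near_def)
  have "Lp p a b w \<le> liminf (\<lambda>j. ereal (bj j - aj j))"
    by (rule Lp_le_liminf[OF adm])
  also have "\<dots> \<le> liminf (\<lambda>j. ereal (b - a + 2))"
    using bounded by (rule Liminf_mono)
  also have "\<dots> < \<infinity>"
    by (simp add: Liminf_const)
  finally show ?thesis .
qed

lemma admissible_member_near:
  assumes Lp: "Lp p a b w < ereal l" and \<eta>: "\<eta> > 0"
  shows "\<exists>A B W. is_bichar A B W \<and> strong_sign_change p A B W \<and> bichar_near \<eta> A B W a b w \<and> B - A < l"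
proof -
  obtain aj bj wj where adm: "admissible_seq p aj bj wj a b w"
      and short: "liminf (\<lambda>j. ereal (bj j - aj j)) < ereal l"
    using Lp unfolding Lp_def Inf_less_iff by blast
  obtain N where "\<forall>j\<ge>N. bichar_near \<eta> (aj j) (bj j) (wj j) a b w"
    using bichar_conv_eventually_near[OF _ \<eta>] adm
    unfolding admissible_seq_def eventually_sequentially by blast
  moreover obtain j where "j > N" "ereal (bj j - aj j) < ereal l"
    using liminf_upper_bound[OF short] by blast
  ultimately show ?thesis
    using adm unfolding admissible_seq_def by (intro exI[of _ "aj j"] exI[of _ "bj j"] exI[of _ "wj j"]) simp
qed

text \<open>Admissible bicharacteristics close to \<open>\<gamma>\<close> are not much shorter than \<open>L\<^sub>p(\<gamma>)\<close>: otherwise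
  they would form an admissible sequence with \<open>lim inf |\<gamma>\<^sub>j| < L\<^sub>p(\<gamma>)\<close>.\<close>

lemma Lp_lower_bound_near:
  assumes Lp: "Lp p a b w = ereal L" and \<epsilon>: "\<epsilon> > 0"
  shows "\<exists>\<eta>>0. \<forall>A B W. is_bichar A B W \<longrightarrow> strong_sign_change p A B W \<longrightarrow>
           bichar_near \<eta> A B W a b w \<longrightarrow> L - \<epsilon> \<le> B - A"
proof (rule ccontr)
  assume "\<not> ?thesis"
  then have "\<forall>k::nat. \<exists>A B W. is_bichar A B W \<and> strong_sign_change p A B W \<and>
               bichar_near (inverse (Suc k)) A B W a b w \<and> B - A < L - \<epsilon>"
    by (metis inverse_positive_iff_positive not_le of_nat_0_less_iff zero_less_Suc)
  then obtain A B W where seq: "\<forall>k::nat. is_bichar (A k) (B k) (W k) \<and> strong_sign_change p (A k) (B k) (W k) \<and>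
               bichar_near (inverse (Suc k)) (A k) (B k) (W k) a b w \<and> B k - A k < L - \<epsilon>"
    by metis
  then have "admissible_seq p A B W a b w"
    unfolding admissible_seq_def using bichar_conv_if_near[OF LIMSEQ_inverse_real_of_nat] by blast
  then have "Lp p a b w \<le> liminf (\<lambda>k. ereal (B k - A k))"
    by (rule Lp_le_liminf)
  also have "\<dots> \<le> liminf (\<lambda>k. ereal (L - \<epsilon>))"
    using seq by (intro Liminf_mono always_eventually) (simp add: less_imp_le)
  also have "\<dots> = ereal (L - \<epsilon>)"
    by (simp add: Liminf_const)
  finally show False
    using Lp \<epsilon> by simp
qed

lemma bichar_near_mono:
  "bichar_near \<eta> A B W a b w \<Longrightarrow> \<eta> \<le> \<eta>' \<Longrightarrow> bichar_near \<eta>' A B W a b w"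
  unfolding bichar_near_def by auto

lemma open_Tstar0: "open (Tstar0 :: ('a::euclidean_space) cpt set)"
proof -
  have "(Tstar0 :: 'a cpt set) = {z. (fst (snd (snd z)), snd (snd (snd z))) \<noteq> (0, 0)}"
    unfolding Tstar0_def by auto
  moreover have "open {z :: 'a cpt. (fst (snd (snd z)), snd (snd (snd z))) \<noteq> (0, 0)}"
    by (rule open_Collect_neq) (intro continuous_intros)+
  ultimately show ?thesis
    by simp
qed

lemma gpt_in_Tstar0: "snd W \<noteq> 0 \<Longrightarrow> gpt t W \<in> Tstar0"
  by (simp add: gpt_def Tstar0_def)

lemma smooth_on_imp_continuous_on: "smooth_on S f \<Longrightarrow> continuous_on S f"
  unfolding smooth_on_def by (metis Ck_on.simps(1))

locale Im_xi1_independent =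
  fixes p :: "('a::euclidean_space) cpt \<Rightarrow> complex"
  assumes continuous_p: "continuous_on Tstar0 p"
    and Im_indep: "\<And>x1 x' xi1 eta1 xi'. (x1, x', xi1, xi') \<in> Tstar0 \<Longrightarrow> (x1, x', eta1, xi') \<in> Tstar0 \<Longrightarrow>
                     Im (p (x1, x', xi1, xi')) = Im (p (x1, x', eta1, xi'))"
begin

lemma continuous_on_Im_along_bichar:
  assumes "snd W \<noteq> 0"
  shows "continuous_on S (\<lambda>t. Im (p (gpt t W)))"
proof -
  have "continuous_on S (\<lambda>t. p (gpt t W))"
    by (rule continuous_on_compose2[OF continuous_p])
      (use gpt_in_Tstar0[OF assms] in \<open>auto simp: gpt_def intro!: continuous_intros\<close>)
  then show ?thesis
    by (intro continuous_intros)
qed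

lemma isCont_Im_across_bichar:
  assumes "snd W \<noteq> 0"
  shows "isCont (\<lambda>W. Im (p (gpt s W))) W"
proof -
  have "isCont p (gpt s W)"
    using continuous_p open_Tstar0 gpt_in_Tstar0[OF assms] continuous_on_eq_continuous_at by blast
  moreover have "isCont (\<lambda>W. gpt s W) W"
    unfolding gpt_def by (intro continuous_intros)
  ultimately show ?thesis
    using isCont_o2 continuous_Im by blast
qed

lemma strong_sign_change_inside:
  assumes W: "snd W \<noteq> 0" and "sm \<le> sp" "Im (p (gpt sm W)) < 0" "0 < Im (p (gpt sp W))"
  shows "\<exists>\<alpha> \<beta>. sm \<le> \<alpha> \<and> \<beta> \<le> sp \<and> is_bichar \<alpha> \<beta> W \<and> strong_sign_change p \<alpha> \<beta> W"
  using sign_change_run_between[OF continuous_on_Im_along_bichar[OF W]] assms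
  unfolding strong_sign_change_iff_sign_change_run is_bichar_def by blast

lemma sign_change_persists_nearby:
  assumes W: "snd W \<noteq> 0" and neg: "Im (p (gpt sm W)) < 0" and pos: "0 < Im (p (gpt sp W))"
  shows "\<exists>r>0. \<forall>W'. dist W' W < r \<longrightarrow> snd W' \<noteq> 0 \<and> Im (p (gpt sm W')) < 0 \<and> 0 < Im (p (gpt sp W'))"
proof -
  have "eventually (\<lambda>W'. Im (p (gpt sm W')) < 0) (at W)"
    using isCont_Im_across_bichar[OF W, of sm] neg unfolding isCont_def by (rule order_tendstoD)
  moreover have "eventually (\<lambda>W'. 0 < Im (p (gpt sp W'))) (at W)"
    using isCont_Im_across_bichar[OF W, of sp] pos unfolding isCont_def by (rule order_tendstoD)
  moreover have "eventually (\<lambda>W'. snd W' \<noteq> 0) (at W)"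
    using tendsto_snd[OF tendsto_ident_at] W by (rule tendsto_imp_eventually_ne)
  ultimately have "eventually (\<lambda>W'. snd W' \<noteq> 0 \<and> Im (p (gpt sm W')) < 0 \<and> 0 < Im (p (gpt sp W'))) (at W)"
    by eventually_elim blast
  then obtain r where "r > 0"
      and "\<forall>W'. W' \<noteq> W \<and> dist W' W < r \<longrightarrow> snd W' \<noteq> 0 \<and> Im (p (gpt sm W')) < 0 \<and> 0 < Im (p (gpt sp W'))"
    unfolding eventually_at by auto
  then show ?thesis
    using assms by (metis (full_types))
qed

text \<open>Only here is the independence of \<open>Im p\<close> from \<open>\<xi>\<^sub>1\<close> used: vanishing on the bicharacteristics
  through nearby \<open>(x', \<xi>')\<close> then gives vanishing on a full neighbourhood in \<open>T\<^sup>*(\<real>\<^sup>n)\<close>.\<close>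

lemma Im_vanishes_on_open_set:
  assumes r: "r > 0"
    and zero: "\<forall>W'. dist W' W < r \<longrightarrow> snd W' \<noteq> 0 \<and> (\<forall>t\<in>{c<..<d}. Im (p (gpt t W')) = 0)"
  shows "\<exists>U. open U \<and> U \<subseteq> Tstar0 \<and> (\<lambda>t. gpt t W) ` {c<..<d} \<subseteq> U \<and> (\<forall>z\<in>U. Im (p z) = 0)"
proof -
  define U :: "'a cpt set"
    where "U = fst -` {c<..<d} \<inter> (\<lambda>z. (fst (snd z), snd (snd (snd z)))) -` ball W r"
  have "open U"
    unfolding U_def by (intro open_Int continuous_open_vimage) (auto intro!: continuous_intros)
  moreover have "(\<lambda>t. gpt t W) ` {c<..<d} \<subseteq> U"
    using r by (auto simp: U_def gpt_def)
  moreover have "z \<in> Tstar0 \<and> Im (p z) = 0" if "z \<in> U" for z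
  proof -
    obtain x1 x' xi1 xi' where z: "z = (x1, x', xi1, xi')"
      by (cases z) auto
    have "dist (x', xi') W < r" "x1 \<in> {c<..<d}"
      using that unfolding U_def z by (auto simp: dist_commute)
    then have "xi' \<noteq> 0" "Im (p (gpt x1 (x', xi'))) = 0"
      using zero by auto
    then show ?thesis
      using Im_indep[of x1 x' xi1 xi' 0] unfolding z by (simp add: Tstar0_def gpt_def)
  qed
  ultimately show ?thesis
    by blast
qed

text \<open>Every nearby run lies in \<open>[sm, sp]\<close> and has length at least \<open>l\<close>, hence contains
  \<open>]sp - l, sm + l[\<close>.\<close>

lemma Im_vanishes_near_long_runs:
  assumes W: "snd W \<noteq> 0" and "sm \<le> sp" and neg: "Im (p (gpt sm W)) < 0" and pos: "0 < Im (p (gpt sp W))"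
    and r0: "r0 > 0"
    and long: "\<forall>A B W'. is_bichar A B W' \<longrightarrow> strong_sign_change p A B W' \<longrightarrow> sm \<le> A \<longrightarrow> B \<le> sp \<longrightarrow>
                 dist W' W < r0 \<longrightarrow> l \<le> B - A"
  shows "\<exists>U. open U \<and> U \<subseteq> Tstar0 \<and> (\<lambda>t. gpt t W) ` {sp - l<..<sm + l} \<subseteq> U \<and> (\<forall>z\<in>U. Im (p z) = 0)"
proof -
  obtain r where r: "r > 0"
    and stable: "\<forall>W'. dist W' W < r \<longrightarrow> snd W' \<noteq> 0 \<and> Im (p (gpt sm W')) < 0 \<and> 0 < Im (p (gpt sp W'))"
    using sign_change_persists_nearby[OF W neg pos] by blast
  have "snd W' \<noteq> 0 \<and> (\<forall>t\<in>{sp - l<..<sm + l}. Im (p (gpt t W')) = 0)" if W': "dist W' W < min r r0" for W'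
  proof -
    obtain \<alpha> \<beta> where run: "sm \<le> \<alpha>" "\<beta> \<le> sp" "is_bichar \<alpha> \<beta> W'" "strong_sign_change p \<alpha> \<beta> W'"
      using strong_sign_change_inside[of W' sm sp] stable W' \<open>sm \<le> sp\<close> by auto
    then have "l \<le> \<beta> - \<alpha>"
      using long[rule_format, OF run(3,4,1,2)] W' by simp
    then have "{sp - l<..<sm + l} \<subseteq> {\<alpha>..\<beta>}"
      using run by auto
    moreover have "snd W' \<noteq> 0"
      using run(3) by (simp add: is_bichar_def)
    ultimately show ?thesis
      using run(4) unfolding strong_sign_change_def by blast
  qed
  then show ?thesis
    using r r0 by (intro Im_vanishes_on_open_set[of "min r r0"]) auto
qed

text \<open>Choose an admissible \<open>[A, B] \<times> {W}\<close> near \<open>\<gamma>\<close> of length below \<open>L + \<epsilon>\<close> and sign-change points \<open>sm, sp\<close>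
  just outside it. All runs near it have length at least \<open>L - \<epsilon>\<close>, so \<open>Im p\<close> vanishes near
  \<open>[sp - L + 2\<epsilon>, sm + L - 2\<epsilon>]\<close>, an interval of length within \<open>7\<epsilon>\<close> of \<open>L\<close>.\<close>

lemma approximating_bichar:
  assumes Lp: "Lp p a b w = ereal L" and L: "L > 0" and \<delta>: "\<delta> > 0"
  shows "\<exists>A B W C D. is_bichar A B W \<and> A \<le> C \<and> C \<le> D \<and> D \<le> B \<and> bichar_near \<delta> A B W a b w \<and>
           \<bar>D - C - L\<bar> < \<delta> \<and> strong_sign_change p A B W \<and>
           (\<exists>U. open U \<and> U \<subseteq> Tstar0 \<and> (\<lambda>t. gpt t W) ` {C..D} \<subseteq> U \<and> (\<forall>z\<in>U. Im (p z) = 0))"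
proof -
  define \<epsilon> where "\<epsilon> = min (\<delta> / 7) (L / 7)"
  have \<epsilon>: "\<epsilon> > 0" "7 * \<epsilon> \<le> \<delta>" "7 * \<epsilon> \<le> L"
    using \<delta> L by (auto simp: \<epsilon>_def)
  obtain \<eta> where \<eta>: "\<eta> > 0" and long: "\<forall>A B W. is_bichar A B W \<longrightarrow> strong_sign_change p A B W \<longrightarrow>
      bichar_near \<eta> A B W a b w \<longrightarrow> L - \<epsilon> \<le> B - A"
    using Lp_lower_bound_near[OF Lp \<epsilon>(1)] by blast
  define \<rho> where "\<rho> = min \<eta> \<delta> / 2"
  have \<rho>: "\<rho> > 0" "2 * \<rho> \<le> \<eta>" "2 * \<rho> \<le> \<delta>"
    using \<eta> \<delta> by (auto simp: \<rho>_def)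
  obtain A B W where AB: "is_bichar A B W" "strong_sign_change p A B W" "bichar_near \<rho> A B W a b w"
      and short: "B - A < L + \<epsilon>"
    using admissible_member_near[OF _ \<rho>(1), of p a b w "L + \<epsilon>"] Lp \<epsilon>(1) by auto
  have "bichar_near \<eta> A B W a b w"
    using bichar_near_mono[OF AB(3)] \<rho> by simp
  then have "L - \<epsilon> \<le> B - A"
    using long AB(1,2) by blast
  have W: "snd W \<noteq> 0"
    using AB(1) by (simp add: is_bichar_def)
  have "min \<epsilon> \<rho> > 0"
    using \<epsilon> \<rho> by simp
  then obtain sm sp where s: "A - min \<epsilon> \<rho> < sm" "sm < A" "B < sp" "sp < B + min \<epsilon> \<rho>"
      and sign: "Im (p (gpt sm W)) < 0" "0 < Im (p (gpt sp W))"
    using AB(2) unfolding strong_sign_change_def by blast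
  have long_near: "L - \<epsilon> \<le> B' - A'"
    if "is_bichar A' B' W'" "strong_sign_change p A' B' W'" "sm \<le> A'" "B' \<le> sp" "dist W' W < \<rho>"
    for A' B' W'
  proof -
    have "dist W' w \<le> dist W' W + dist W w"
      by (rule dist_triangle)
    then have "bichar_near \<eta> A' B' W' a b w"
      using AB(3) s that \<rho> min.cobounded2[of \<epsilon> \<rho>] unfolding bichar_near_def by linarith
    then show ?thesis
      using long that by blast
  qed
  have "sm \<le> sp"
    using s AB(1) by (simp add: is_bichar_def)
  then obtain U where U: "open U" "U \<subseteq> Tstar0" "\<forall>z\<in>U. Im (p z) = 0"
      and U_contains: "(\<lambda>t. gpt t W) ` {sp - (L - \<epsilon>)<..<sm + (L - \<epsilon>)} \<subseteq> U"
    using Im_vanishes_near_long_runs[OF W _ sign \<rho>(1), of "L - \<epsilon>"] long_near by blast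
  define C where "C = sp - L + 2 * \<epsilon>"
  define D where "D = sm + L - 2 * \<epsilon>"
  have "{C..D} \<subseteq> {sp - (L - \<epsilon>)<..<sm + (L - \<epsilon>)}"
    using \<epsilon> by (auto simp: C_def D_def)
  then have "(\<lambda>t. gpt t W) ` {C..D} \<subseteq> U"
    using U_contains by blast
  moreover have "A \<le> C" "C \<le> D" "D \<le> B" "\<bar>D - C - L\<bar> < \<delta>"
    using s short \<open>L - \<epsilon> \<le> B - A\<close> \<epsilon> min.cobounded1[of \<epsilon> \<rho>] unfolding C_def D_def by linarith+
  moreover have "bichar_near \<delta> A B W a b w"
    using bichar_near_mono[OF AB(3)] \<rho> by simp
  ultimately show ?thesis
    using AB U by blast
qed

end

theorem lemma2p19:
  fixes p :: "('a::euclidean_space) cpt \<Rightarrow> complex"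
    and a b :: real and w :: "'a \<times> 'a"
  assumes smooth: "smooth_on Tstar0 p"
    and re_p: "\<forall>x1 x' xi1 xi'. (x1, x', xi1, xi') \<in> Tstar0 \<longrightarrow> Re (p (x1, x', xi1, xi')) = xi1"
    and im_indep: "\<forall>x1 x' xi1 eta1 xi'. (x1, x', xi1, xi') \<in> Tstar0 \<longrightarrow> (x1, x', eta1, xi') \<in> Tstar0
                     \<longrightarrow> Im (p (x1, x', xi1, xi')) = Im (p (x1, x', eta1, xi'))"
    and bichar: "is_bichar a b w"
    and Lp_defined: "\<exists>aj bj wj. admissible_seq p aj bj wj a b w"
    and Lp_pos: "Lp p a b w > 0"
  shows "\<exists>aj bj wj cj dj.
           (\<forall>j. is_bichar (aj j) (bj j) (wj j) \<and> aj j \<le> cj j \<and> cj j \<le> dj j \<and> dj j \<le> bj j) \<and>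
           bichar_conv aj bj wj a b w \<and>
           (\<lambda>j. ereal (dj j - cj j)) \<longlonglongrightarrow> Lp p a b w \<and>
           (\<forall>j. strong_sign_change p (aj j) (bj j) (wj j)) \<and>
           (\<forall>j. \<exists>U. open U \<and> U \<subseteq> Tstar0 \<and> (\<lambda>t. gpt t (wj j)) ` {cj j..dj j} \<subseteq> U \<and>
                    (\<forall>z\<in>U. Im (p z) = 0))"
proof -
  interpret Im_xi1_independent p
    using smooth_on_imp_continuous_on[OF smooth] im_indep by unfold_locales blast+
  have "Lp p a b w < \<infinity>"
    using Lp_defined Lp_less_PInf by blast
  then obtain L where L: "Lp p a b w = ereal L" "L > 0"
    using Lp_pos by (cases "Lp p a b w") auto
  have "\<forall>k::nat. \<exists>A B W C D. is_bichar A B W \<and> A \<le> C \<and> C \<le> D \<and> D \<le> B \<and>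
      bichar_near (inverse (Suc k)) A B W a b w \<and> \<bar>D - C - L\<bar> < inverse (Suc k) \<and>
      strong_sign_change p A B W \<and>
      (\<exists>U. open U \<and> U \<subseteq> Tstar0 \<and> (\<lambda>t. gpt t W) ` {C..D} \<subseteq> U \<and> (\<forall>z\<in>U. Im (p z) = 0))"
    using approximating_bichar[OF L] by simp
  then obtain aj bj wj cj dj where approx: "\<forall>k. is_bichar (aj k) (bj k) (wj k) \<and>
      aj k \<le> cj k \<and> cj k \<le> dj k \<and> dj k \<le> bj k \<and>
      bichar_near (inverse (Suc k)) (aj k) (bj k) (wj k) a b w \<and> \<bar>dj k - cj k - L\<bar> < inverse (Suc k) \<and>
      strong_sign_change p (aj k) (bj k) (wj k) \<and>
      (\<exists>U. open U \<and> U \<subseteq> Tstar0 \<and> (\<lambda>t. gpt t (wj k)) ` {cj k..dj k} \<subseteq> U \<and> (\<forall>z\<in>U. Im (p z) = 0))"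
    by metis
  have "bichar_conv aj bj wj a b w"
    using approx by (intro bichar_conv_if_near[OF LIMSEQ_inverse_real_of_nat]) blast
  moreover have "(\<lambda>k. dj k - cj k - L) \<longlonglongrightarrow> 0"
    using approx by (intro Lim_null_comparison[OF _ LIMSEQ_inverse_real_of_nat] always_eventually) (simp add: less_imp_le)
  then have "(\<lambda>k. ereal (dj k - cj k)) \<longlonglongrightarrow> Lp p a b w"
    unfolding L(1) by (simp add: LIM_zero_cancel)
  ultimately show ?thesis
    using approx by blast
qed

end
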